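(* For all $\alpha,\beta\in K$, $$\sum_{s=1}^\kappa\Big(\frac12-\frac s\kappa\Big)(\alpha|\sigma^s\beta)=-\langle\alpha,\beta\rangle+\mathrm{rk}(\alpha)\deg(\beta)-\mathrm{rk}(\beta)\deg(\alpha),$$ where $\kappa=2(n-2)$.
   Context: Fix an integer $n\ge3$; $X=\mathbb{P}^1_{n-2,2,2}$ is the orbifold projective line with orbifold points of orders $n-2,2,2$; $a_1=n-2$, $a_2=a_3=2$. Its $K$-ring is $K=\mathbb{Z}[L_1,L_2,L_3]/\langle L_i^{a_i}-L_j^{a_j},(L_i-1)(L_j-1):i\neq j\rangle$, $L:=L_1^{n-2}$. $\mathrm{rk}:K\to\mathbb{Z}$ is the ring map $L_i\mapsto1$; $\deg:K\to\mathbb{Q}$ is additive with $\deg(1)=0$, $\deg(L_i)=1/a_i$, $\deg(EF)=\mathrm{rk}(E)\deg(F)+\mathrm{rk}(F)\deg(E)$. $\langle a,b\rangle=\chi(a^\vee\otimes b)$ is the Euler pairing (orbifold holomorphic Euler characteristic) and $(a|b)=\langle a,b\rangle+\langle b,a\rangle$ is the intersection pairing. $\sigma:K\to K$ is multiplication by the tangent bundle class $T=L_1+L_2+L_3-L-1$. *)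

theory Defs
  imports Complex_Main "HOL-Library.Poly_Mapping" "HOL-Library.Product_Plus"
begin

text \<open>Laurent monomials L1^i L2^j L3^k are indexed by exponent triples (i,j,k) in Z^3.
  Kpoly is the Laurent polynomial ring Z[L1^(+-1),L2^(+-1),L3^(+-1)] (group ring of Z^3).
  The K-ring K of the orbifold line P^1_{n-2,2,2} is the quotient of Kpoly by the ideal
  Krel_ideal below (the L_i are invertible in K, so this agrees with the quotient of
  Z[L1,L2,L3]).  All functions below (rk, deg, chi, dual, sigma) are defined on
  representatives; each is compatible with the ideal, so quantifying over all
  representatives is the same as quantifying over K.\<close>

type_synonym lmon = "int \<times> int \<times> int"
type_synonym Kpoly = "lmon \<Rightarrow>\<^sub>0 int"

definition Lmon :: "lmon \<Rightarrow> Kpoly" where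
  "Lmon x = Poly_Mapping.single x 1"

definition L1 :: Kpoly where "L1 = Lmon (1,0,0)"
definition L2 :: Kpoly where "L2 = Lmon (0,1,0)"
definition L3 :: Kpoly where "L3 = Lmon (0,0,1)"

definition ord_pt :: "nat \<Rightarrow> nat \<Rightarrow> nat" where
  "ord_pt n i = (if i = 1 then n - 2 else 2)"

definition Lcls :: "nat \<Rightarrow> Kpoly" where
  "Lcls n = L1 ^ (n - 2)"

definition Krel_ideal :: "nat \<Rightarrow> Kpoly set" where
  "Krel_ideal n = {p. \<exists>c1 c2 c3 d1 d2 d3 :: Kpoly.
      p = c1 * (L1 ^ (n-2) - L2 ^ 2) + c2 * (L2 ^ 2 - L3 ^ 2) + c3 * (L1 ^ (n-2) - L3 ^ 2)
        + d1 * ((L1 - 1) * (L2 - 1)) + d2 * ((L2 - 1) * (L3 - 1)) + d3 * ((L1 - 1) * (L3 - 1))}"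

definition Keq :: "nat \<Rightarrow> Kpoly \<Rightarrow> Kpoly \<Rightarrow> bool" where
  "Keq n p q \<longleftrightarrow> p - q \<in> Krel_ideal n"

definition rk :: "Kpoly \<Rightarrow> int" where
  "rk p = (\<Sum>x\<in>Poly_Mapping.keys p. Poly_Mapping.lookup p x)"

text \<open>degree: additive, deg 1 = 0, deg L_i = 1/a_i, Leibniz rule; on a monomial of rank 1
  L1^i L2^j L3^k this gives i/(n-2) + j/2 + k/2\<close>
definition deg :: "nat \<Rightarrow> Kpoly \<Rightarrow> rat" where
  "deg n p = (\<Sum>x\<in>Poly_Mapping.keys p. of_int (Poly_Mapping.lookup p x) *
      (of_int (fst x) / of_nat (n - 2) + of_int (fst (snd x)) / 2 + of_int (snd (snd x)) / 2))"

text \<open>orbifold holomorphic Euler characteristic: the line bundle O(i x1 + j x2 + k x3) has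
  normal form O(l c + sum l_i x_i) with 0 <= l_i < a_i, l = i div (n-2) + j div 2 + k div 2,
  and chi = l + 1; extended additively.\<close>
definition chi :: "nat \<Rightarrow> Kpoly \<Rightarrow> int" where
  "chi n p = (\<Sum>x\<in>Poly_Mapping.keys p. Poly_Mapping.lookup p x *
      (fst x div int (n - 2) + fst (snd x) div 2 + snd (snd x) div 2 + 1))"

definition dual :: "Kpoly \<Rightarrow> Kpoly" where
  "dual p = (\<Sum>x\<in>Poly_Mapping.keys p. Poly_Mapping.single (- x) (Poly_Mapping.lookup p x))"

definition euler :: "nat \<Rightarrow> Kpoly \<Rightarrow> Kpoly \<Rightarrow> int" where
  "euler n a b = chi n (dual a * b)"

definition ipair :: "nat \<Rightarrow> Kpoly \<Rightarrow> Kpoly \<Rightarrow> int" where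
  "ipair n a b = euler n a b + euler n b a"

definition Tcls :: "nat \<Rightarrow> Kpoly" where
  "Tcls n = L1 + L2 + L3 - Lcls n - 1"

definition sigma :: "nat \<Rightarrow> Kpoly \<Rightarrow> Kpoly" where
  "sigma n x = Tcls n * x"

end

theory Submission
  imports Defs
begin

(* Write m = n - 2.  Both sides are biadditive in (alpha, beta), so it suffices to take
  monomials alpha = L^a, beta = L^b.  The Euler pairing only sees classes through chi, and
  chi cannot tell multiplication by T from multiplication by the anticanonical line bundle
  L^(1-m,1,1) (a direct check with the floor formula defining chi); dually for the dual of T.  So
  (L^a | sigma^s L^b) = (L^a | L^(b + s (1-m,1,1))), and for monomials
  (L^a | L^c) = [m | c1 - a1] + [2 | c2 - a2] + [2 | c3 - a3] - 1, because
  floor(x/q) + floor(-x/q) = -[q does not divide x].  Over a full period s = 1..2m the weights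
  1/2 - s/(2m) turn an indicator [q | x + s] with q | 2m into the sawtooth (x mod q)/q - 1/2,
  and the three sawtooths add up to deg L^(b-a) - chi(L^(b-a)). *)

lemma additive_sum_keys:
  fixes g :: "'a \<Rightarrow> int \<Rightarrow> 'b::ab_group_add"
  assumes "\<And>x. additive (g x)"
  shows "additive (\<lambda>p. \<Sum>x\<in>Poly_Mapping.keys p. g x (Poly_Mapping.lookup p x))"
proof
  fix p q :: "'a \<Rightarrow>\<^sub>0 int"
  let ?S = "Poly_Mapping.keys p \<union> Poly_Mapping.keys q"
  have on_S: "(\<Sum>x\<in>Poly_Mapping.keys r. g x (Poly_Mapping.lookup r x))
      = (\<Sum>x\<in>?S. g x (Poly_Mapping.lookup r x))" if "Poly_Mapping.keys r \<subseteq> ?S" for r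
    using that by (intro sum.mono_neutral_left) (auto simp: in_keys_iff additive.zero[OF assms])
  show "(\<Sum>x\<in>Poly_Mapping.keys (p + q). g x (Poly_Mapping.lookup (p + q) x))
      = (\<Sum>x\<in>Poly_Mapping.keys p. g x (Poly_Mapping.lookup p x))
      + (\<Sum>x\<in>Poly_Mapping.keys q. g x (Poly_Mapping.lookup q x))"
  proof -
    have "(\<Sum>x\<in>Poly_Mapping.keys (p + q). g x (Poly_Mapping.lookup (p + q) x))
        = (\<Sum>x\<in>?S. g x (Poly_Mapping.lookup p x) + g x (Poly_Mapping.lookup q x))"
      using on_S[of "p + q"] keys_add[of p q] by (simp add: lookup_add additive.add[OF assms])
    then show ?thesis
      by (simp add: on_S sum.distrib)
  qed
qed

lemma additive_eqI:
  assumes "additive F" "additive G" "\<And>x. F (Lmon x) = G (Lmon x)"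
  shows "F p = G p"
proof -
  have "Poly_Mapping.keys p \<subseteq> UNIV" by simp
  then show ?thesis
    by (induction p rule: frag_induction)
      (simp_all add: assms(3)[unfolded Lmon_def] additive.zero[OF assms(1)] additive.zero[OF assms(2)]
        additive.diff[OF assms(1)] additive.diff[OF assms(2)])
qed

lemma biadditive_eqI:
  assumes "\<And>b. additive (\<lambda>a. F a b)" "\<And>a. additive (F a)"
    and "\<And>b. additive (\<lambda>a. G a b)" "\<And>a. additive (G a)"
    and "\<And>x y. F (Lmon x) (Lmon y) = G (Lmon x) (Lmon y)"
  shows "F p q = G p q"
proof -
  have on_Lmon: "F (Lmon x) q = G (Lmon x) q" for x
    by (rule additive_eqI[where F = "F (Lmon x)"]) (simp_all add: assms)
  show ?thesis
    by (rule additive_eqI[where F = "\<lambda>a. F a q"]) (simp_all add: assms on_Lmon)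
qed

lemma mult_power_cong:
  fixes f :: "'a::comm_monoid_mult \<Rightarrow> 'b"
  assumes "\<And>p. f (p * a) = f (p * b)"
  shows "f (p * a ^ s) = f (p * b ^ s)"
proof (induction s arbitrary: p)
  case (Suc s)
  have "f (p * a ^ Suc s) = f ((p * a) * a ^ s)"
    by (simp add: mult_ac)
  also have "\<dots> = f ((p * b ^ s) * a)"
    using Suc[of "p * a"] by (simp add: mult_ac)
  also have "\<dots> = f (p * b ^ Suc s)"
    using assms[of "p * b ^ s"] by (simp add: mult_ac)
  finally show ?case .
qed simp

lemma div_add_div_uminus:
  fixes x q :: int
  assumes "q \<noteq> 0"
  shows "x div q + (- x) div q = - of_bool (\<not> q dvd x)"
  using assms by (simp add: zdiv_zminus1_eq_if dvd_eq_mod_eq_0)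

lemma int_dvd_add_iff_eq_offset:
  fixes q s :: nat and x :: int
  assumes "s \<in> {1..q}"
  shows "int q dvd x + int s \<longleftrightarrow> s = q - nat (x mod int q)"
proof -
  define r where "r = x mod int q"
  have r: "0 \<le> r" "r < int q"
    using assms by (auto simp: r_def)
  have "x + int s = (r + int s - int q) + (x div int q + 1) * int q"
    by (simp add: r_def algebra_simps)
  then have "int q dvd x + int s \<longleftrightarrow> int q dvd r + int s - int q"
    by (simp only: dvd_add_times_triv_right_iff)
  also have "\<dots> \<longleftrightarrow> r + int s - int q = 0"
  proof
    assume "int q dvd r + int s - int q"
    moreover have "\<bar>r + int s - int q\<bar> < int q"
      using r assms by auto
    ultimately show "r + int s - int q = 0"
      using dvd_imp_le_int[of "r + int s - int q" "int q"] by linarith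
  qed simp
  also have "\<dots> \<longleftrightarrow> s = q - nat r"
    using r assms by auto
  finally show ?thesis
    by (simp add: r_def)
qed

lemma sum_one_period:
  fixes g :: "nat \<Rightarrow> 'a::semiring_1" and x :: int
  assumes "q > 0"
  shows "(\<Sum>s = 1..q. g s * of_bool (int q dvd x + int s)) = g (q - nat (x mod int q))"
proof -
  define s0 where "s0 = q - nat (x mod int q)"
  have "nat (x mod int q) < q"
    using assms by (simp add: nat_less_iff)
  then have "s0 \<in> {1..q}"
    by (auto simp: s0_def)
  moreover have "(\<Sum>s = 1..q. g s * of_bool (int q dvd x + int s)) = (\<Sum>s = 1..q. if s = s0 then g s else 0)"
    by (rule sum.cong) (simp_all add: int_dvd_add_iff_eq_offset s0_def)
  ultimately show ?thesis
    by (simp add: s0_def)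
qed

lemma sum_periods:
  fixes g :: "nat \<Rightarrow> 'a::semiring_1" and x :: int
  assumes "q > 0"
  shows "(\<Sum>s = 1..q * M. g s * of_bool (int q dvd x + int s))
    = (\<Sum>t<M. g (q * t + (q - nat (x mod int q))))"
proof (induction M)
  case (Suc M)
  let ?h = "\<lambda>s. g s * of_bool (int q dvd x + int s)"
  have "q * Suc M = q * M + q"
    by simp
  then have "(\<Sum>s = 1..q * Suc M. ?h s) = (\<Sum>s = 1..q * M. ?h s) + (\<Sum>s = q * M + 1..q * M + q. ?h s)"
    by (simp only: sum.ub_add_nat[of 1 "q * M" ?h q] le_add2)
  also have "(\<Sum>s = q * M + 1..q * M + q. ?h s) = (\<Sum>s = 1..q. ?h (s + q * M))"
    using sum.shift_bounds_cl_nat_ivl[of ?h 1 "q * M" q] by (simp add: add.commute)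
  also have "\<dots> = (\<Sum>s = 1..q. g (s + q * M) * of_bool (int q dvd x + int s))"
  proof -
    have "x + int (s + q * M) = (x + int s) + int M * int q" for s
      by simp
    then show ?thesis
      by (simp only: dvd_add_times_triv_right_iff)
  qed
  also have "\<dots> = g (q * M + (q - nat (x mod int q)))"
    using sum_one_period[OF assms, of "\<lambda>s. g (s + q * M)" x] by (simp add: add.commute del: sum_mult_of_bool_eq)
  finally show ?case
    by (simp only: Suc.IH sum.lessThan_Suc)
qed simp

lemma sum_sawtooth:
  fixes x :: int and q N :: nat
  assumes "q dvd N" "N > 0"
  shows "(\<Sum>s = 1..N. (1/2 - of_nat s / of_nat N) * of_bool (int q dvd x + int s) :: 'a::field_char_0)
    = of_int (x mod int q) / of_nat q - 1/2"
proof -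
  obtain M where N: "N = q * M"
    using assms(1) by blast
  have q: "q > 0" and M: "M > 0"
    using assms N by auto
  define r where "r = q - nat (x mod int q)"
  have "0 \<le> x mod int q" "x mod int q < int q"
    using q by simp_all
  then have "nat (x mod int q) \<le> q"
    by (simp add: nat_le_iff)
  then have r: "of_nat r = (of_nat q - of_int (x mod int q) :: 'a)"
    using q by (simp add: r_def of_nat_diff)
  have gauss: "(\<Sum>t<M. of_nat t) = of_nat M * (of_nat M - 1) / (2 :: 'a)"
    by (induction M) (simp_all add: field_simps)
  have "(\<Sum>s = 1..N. (1/2 - of_nat s / of_nat N) * of_bool (int q dvd x + int s) :: 'a)
      = (\<Sum>t<M. 1/2 - (of_nat q * of_nat t + of_nat r) / (of_nat q * of_nat M))"
    unfolding N by (subst sum_periods[OF q]) (simp add: r_def)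
  also have "\<dots> = of_nat M / 2 - (of_nat q * (\<Sum>t<M. of_nat t) + of_nat M * of_nat r) / (of_nat q * of_nat M)"
    by (simp add: sum_subtractf sum_divide_distrib[symmetric] sum.distrib sum_distrib_left)
  also have "\<dots> = 1/2 - of_nat r / of_nat q"
    using q M by (simp add: gauss field_simps)
  finally show ?thesis
    using q by (simp add: r field_simps)
qed

lemma sum_sawtooth_weights:
  assumes "N > 0"
  shows "(\<Sum>s = 1..N. 1/2 - of_nat s / of_nat N :: 'a::field_char_0) = - 1/2"
  using sum_sawtooth[of 1 N 0] assms by simp

lemma of_int_mod_divide:
  fixes x :: int
  assumes "q > 0"
  shows "of_int (x mod int q) / of_nat q = (of_int x / of_nat q - of_int (x div int q) :: 'a::field_char_0)"
proof -
  have "of_int (x mod int q) = (of_int x - of_nat q * of_int (x div int q) :: 'a)"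
    by (simp flip: minus_div_mult_eq_mod)
  then show ?thesis
    using assms by (simp add: field_simps)
qed

lemma additive_rk: "additive rk"
  unfolding rk_def[abs_def] by (rule additive_sum_keys[where g = "\<lambda>_ c. c"]) (simp add: additive_def)

lemma additive_deg: "additive (deg n)"
  unfolding deg_def[abs_def] by (rule additive_sum_keys) (simp add: additive_def distrib_right)

lemma additive_chi: "additive (chi n)"
  unfolding chi_def[abs_def] by (rule additive_sum_keys) (simp add: additive_def distrib_right)

lemma additive_dual: "additive dual"
  unfolding dual_def[abs_def] by (rule additive_sum_keys) (simp add: additive_def single_add)

lemma additive_euler_left: "additive (\<lambda>a. euler n a b)"
  by (simp add: additive_def euler_def additive.add[OF additive_dual] distrib_right additive.add[OF additive_chi])

lemma additive_euler_right: "additive (euler n a)"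
  by (simp add: additive_def euler_def distrib_left additive.add[OF additive_chi])

lemma additive_ipair_left: "additive (\<lambda>a. ipair n a b)"
  by (simp add: additive_def ipair_def additive.add[OF additive_euler_left] additive.add[OF additive_euler_right])

lemma additive_ipair_right: "additive (ipair n a)"
  by (simp add: additive_def ipair_def additive.add[OF additive_euler_left] additive.add[OF additive_euler_right])

lemma Lmon_zero: "Lmon 0 = 1"
  by (simp add: Lmon_def)

lemma Lmon_mult: "Lmon x * Lmon y = Lmon (x + y)"
  by (simp add: Lmon_def mult_single)

lemma dual_Lmon: "dual (Lmon x) = Lmon (- x)"
  by (simp add: dual_def Lmon_def)

lemma dual_mult: "dual (p * q) = dual p * dual q"
  by (rule biadditive_eqI[where F = "\<lambda>p q. dual (p * q)"])
    (simp_all add: additive_def distrib_left distrib_right additive.add[OF additive_dual]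
      Lmon_mult dual_Lmon)

lemma dual_power: "dual (p ^ s) = dual p ^ s"
  by (induction s) (simp_all add: dual_mult flip: Lmon_zero, simp add: dual_Lmon)

lemma rk_Lmon: "rk (Lmon x) = 1"
  by (simp add: rk_def Lmon_def)

lemma deg_Lmon: "deg n (Lmon (i, j, k)) = of_int i / of_nat (n - 2) + of_int j / 2 + of_int k / 2"
  by (simp add: deg_def Lmon_def)

lemma chi_Lmon: "chi n (Lmon (i, j, k)) = i div int (n - 2) + j div 2 + k div 2 + 1"
  by (simp add: chi_def Lmon_def)

lemma L1_power: "L1 ^ k = Lmon (int k, 0, 0)"
  by (induction k) (simp_all add: L1_def Lmon_mult algebra_simps flip: Lmon_zero, simp add: zero_prod_def)

lemma Tcls_Lmon: "Tcls n = Lmon (1, 0, 0) + Lmon (0, 1, 0) + Lmon (0, 0, 1) - Lmon (int (n - 2), 0, 0) - 1"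
  unfolding Tcls_def Lcls_def L1_power by (simp add: L1_def L2_def L3_def)

lemma sigma_power: "(sigma n ^^ s) b = Tcls n ^ s * b"
  by (induction s) (simp_all add: sigma_def mult.assoc)

(* The anticanonical bundle L^2 L1^(1-m) L2^(-1) L3^(-1), m = n - 2, rewritten with L^2 = L2^2 L3^2. *)
definition anticanon :: "nat \<Rightarrow> Kpoly" where
  "anticanon n = Lmon (1 - int (n - 2), 1, 1)"

lemma anticanon_power: "anticanon n ^ s = Lmon (int s * (1 - int (n - 2)), int s, int s)"
  by (induction s) (simp_all add: anticanon_def Lmon_mult algebra_simps flip: Lmon_zero, simp add: zero_prod_def)

lemma chi_mult_Tcls:
  assumes "n \<ge> 3"
  shows "chi n (p * Tcls n) = chi n (p * anticanon n)"
proof (rule additive_eqI[where F = "\<lambda>p. chi n (p * Tcls n)"])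
  fix x :: lmon
  obtain i j k where x: "x = (i, j, k)" by (cases x)
  obtain m where m: "n - 2 = m" "m > 0" using assms by simp
  have "(i + 1 - int m) div int m = (i + 1) div int m - 1"
    using div_add_self2[of "int m" "i + 1 - int m"] m by simp
  then show "chi n (Lmon x * Tcls n) = chi n (Lmon x * anticanon n)"
    using m by (simp add: x Tcls_Lmon anticanon_def algebra_simps Lmon_mult chi_Lmon
        additive.add[OF additive_chi] additive.diff[OF additive_chi] flip: Lmon_zero)
qed (simp_all add: additive_def distrib_right additive.add[OF additive_chi])

lemma chi_mult_dual_Tcls:
  assumes "n \<ge> 3"
  shows "chi n (p * dual (Tcls n)) = chi n (p * dual (anticanon n))"
proof (rule additive_eqI[where F = "\<lambda>p. chi n (p * dual (Tcls n))"])
  fix x :: lmon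
  obtain i j k where x: "x = (i, j, k)" by (cases x)
  obtain m where m: "n - 2 = m" "m > 0" using assms by simp
  have "(i - 1 + int m) div int m = (i - 1) div int m + 1"
    using m by simp
  moreover have "(i - int m) div int m = i div int m - 1"
    using div_add_self2[of "int m" "i - int m"] m by simp
  ultimately show "chi n (Lmon x * dual (Tcls n)) = chi n (Lmon x * dual (anticanon n))"
    using m by (simp add: x Tcls_Lmon anticanon_def algebra_simps Lmon_mult chi_Lmon dual_Lmon
        additive.add[OF additive_dual] additive.diff[OF additive_dual]
        additive.add[OF additive_chi] additive.diff[OF additive_chi] flip: Lmon_zero)
qed (simp_all add: additive_def distrib_right additive.add[OF additive_chi])

lemma ipair_Tcls_power:
  assumes "n \<ge> 3"
  shows "ipair n a (Tcls n ^ s * b) = ipair n a (anticanon n ^ s * b)"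
proof -
  have "euler n a (Tcls n ^ s * b) = euler n a (anticanon n ^ s * b)"
    using mult_power_cong[where f = "chi n", OF chi_mult_Tcls[OF assms], of "dual a * b" s]
    by (simp add: euler_def mult_ac)
  moreover have "euler n (Tcls n ^ s * b) a = euler n (anticanon n ^ s * b) a"
    using mult_power_cong[where f = "chi n", OF chi_mult_dual_Tcls[OF assms], of "dual b * a" s]
    by (simp add: euler_def dual_mult dual_power mult_ac)
  ultimately show ?thesis
    by (simp add: ipair_def)
qed

lemma chi_Lmon_add_chi_Lmon_uminus:
  assumes "n \<ge> 3"
  shows "chi n (Lmon (i, j, k)) + chi n (Lmon (- i, - j, - k))
    = of_bool (int (n - 2) dvd i) + of_bool (2 dvd j) + of_bool (2 dvd k) - 1"
proof -
  obtain m where m: "n - 2 = m" "m > 0" using assms by simp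
  have "chi n (Lmon (i, j, k)) + chi n (Lmon (- i, - j, - k))
      = (i div int m + (- i) div int m) + (j div 2 + (- j) div 2) + (k div 2 + (- k) div 2) + 2"
    by (simp add: chi_Lmon m)
  also have "\<dots> = of_bool (int m dvd i) + of_bool (2 dvd j) + of_bool (2 dvd k) - 1"
    using m by (simp only: div_add_div_uminus) simp
  finally show ?thesis
    by (simp add: m)
qed

lemma ipair_Lmon:
  assumes "n \<ge> 3"
  shows "ipair n (Lmon (a1, a2, a3)) (Lmon (b1, b2, b3))
    = of_bool (int (n - 2) dvd b1 - a1) + of_bool (2 dvd b2 - a2) + of_bool (2 dvd b3 - a3) - 1"
proof -
  have "ipair n (Lmon (a1, a2, a3)) (Lmon (b1, b2, b3))
      = chi n (Lmon (b1 - a1, b2 - a2, b3 - a3)) + chi n (Lmon (- (b1 - a1), - (b2 - a2), - (b3 - a3)))"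
    by (simp add: ipair_def euler_def dual_Lmon Lmon_mult add.commute)
  then show ?thesis
    by (simp only: chi_Lmon_add_chi_Lmon_uminus[OF assms])
qed

lemma ipair_Lmon_anticanon_power:
  assumes "n \<ge> 3"
  shows "ipair n (Lmon (a1, a2, a3)) (anticanon n ^ s * Lmon (b1, b2, b3))
    = of_bool (int (n - 2) dvd b1 - a1 + int s) + of_bool (2 dvd b2 - a2 + int s)
      + of_bool (2 dvd b3 - a3 + int s) - 1"
proof -
  obtain m where m: "n - 2 = m" using assms by simp
  have "b1 + int s * (1 - int m) - a1 = (b1 - a1 + int s) + (- int s) * int m"
    by (simp add: algebra_simps)
  then have "int m dvd b1 + int s * (1 - int m) - a1 \<longleftrightarrow> int m dvd b1 - a1 + int s"
    by (simp only: dvd_add_times_triv_right_iff)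
  moreover have "b2 + int s - a2 = b2 - a2 + int s" "b3 + int s - a3 = b3 - a3 + int s"
    by simp_all
  moreover have "anticanon n ^ s * Lmon (b1, b2, b3)
      = Lmon (b1 + int s * (1 - int m), b2 + int s, b3 + int s)"
    by (simp add: anticanon_power Lmon_mult m add.commute)
  ultimately show ?thesis
    by (simp only: ipair_Lmon[OF assms] m)
qed

lemma sum_ipair_anticanon_power_Lmon:
  assumes "n \<ge> 3"
  shows "(\<Sum>s = 1..2 * (n - 2). (1/2 - of_nat s / of_nat (2 * (n - 2))) *
            of_int (ipair n (Lmon a) (anticanon n ^ s * Lmon b)) :: rat)
    = - of_int (euler n (Lmon a) (Lmon b)) + of_int (rk (Lmon a)) * deg n (Lmon b)
      - of_int (rk (Lmon b)) * deg n (Lmon a)"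
proof -
  obtain a1 a2 a3 where a: "a = (a1, a2, a3)" by (cases a)
  obtain b1 b2 b3 where b: "b = (b1, b2, b3)" by (cases b)
  obtain m where m: "n - 2 = m" "m > 0" using assms by simp
  define u1 u2 u3 where "u1 = b1 - a1" and "u2 = b2 - a2" and "u3 = b3 - a3"
  let ?c = "\<lambda>s::nat. 1/2 - of_nat s / of_nat (2 * m) :: rat"
  have saw: "(\<Sum>s = 1..2 * m. ?c s * of_bool (int q dvd x + int s))
      = of_int (x mod int q) / of_nat q - 1/2" if "q dvd 2 * m" for q x
    using that m by (intro sum_sawtooth) simp_all
  have "(\<Sum>s = 1..2 * (n - 2). (1/2 - of_nat s / of_nat (2 * (n - 2))) *
            of_int (ipair n (Lmon a) (anticanon n ^ s * Lmon b)) :: rat)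
      = (\<Sum>s = 1..2 * m. ?c s * of_bool (int m dvd u1 + int s) + ?c s * of_bool (2 dvd u2 + int s)
          + ?c s * of_bool (2 dvd u3 + int s) - ?c s)"
    by (rule sum.cong) (simp_all add: a b m u1_def u2_def u3_def ipair_Lmon_anticanon_power[OF assms]
        distrib_left right_diff_distrib del: sum_mult_of_bool_eq)
  also have "\<dots> = (of_int (u1 mod int m) / of_nat m - 1/2) + (of_int (u2 mod 2) / 2 - 1/2)
      + (of_int (u3 mod 2) / 2 - 1/2) + 1/2"
    using saw[of m u1, OF dvd_triv_right] saw[of 2 u2, OF dvd_triv_left]
      saw[of 2 u3, OF dvd_triv_left] sum_sawtooth_weights[of "2 * m", where 'a = rat] m
    by (simp only: sum.distrib sum_subtractf of_nat_numeral)
  also have "\<dots> = of_int u1 / of_nat m + of_int u2 / 2 + of_int u3 / 2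
      - of_int (u1 div int m + u2 div 2 + u3 div 2 + 1)"
    using of_int_mod_divide[where 'a = rat, of m u1] of_int_mod_divide[where 'a = rat, of 2 u2]
      of_int_mod_divide[where 'a = rat, of 2 u3] m
    by (simp add: diff_divide_distrib)
  also have "\<dots> = - of_int (euler n (Lmon a) (Lmon b)) + of_int (rk (Lmon a)) * deg n (Lmon b)
      - of_int (rk (Lmon b)) * deg n (Lmon a)"
    by (simp add: a b euler_def dual_Lmon Lmon_mult chi_Lmon rk_Lmon deg_Lmon m u1_def u2_def u3_def
        diff_divide_distrib)
  finally show ?thesis .
qed

theorem lemma10:
  fixes n :: nat and \<alpha> \<beta> :: Kpoly
  assumes "n \<ge> 3"
  shows "(\<Sum>s = 1..2 * (n - 2). (1/2 - of_nat s / of_nat (2 * (n - 2))) *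
            of_int (ipair n \<alpha> ((sigma n ^^ s) \<beta>)) :: rat)
         = - of_int (euler n \<alpha> \<beta>) + of_int (rk \<alpha>) * deg n \<beta> - of_int (rk \<beta>) * deg n \<alpha>"
proof -
  define F where "F \<alpha> \<beta> = (\<Sum>s = 1..2 * (n - 2). (1/2 - of_nat s / of_nat (2 * (n - 2))) *
            of_int (ipair n \<alpha> (anticanon n ^ s * \<beta>)) :: rat)" for \<alpha> \<beta>
  define G where "G \<alpha> \<beta> = - of_int (euler n \<alpha> \<beta>) + of_int (rk \<alpha>) * deg n \<beta>
            - of_int (rk \<beta>) * deg n \<alpha>" for \<alpha> \<beta>
  have "F \<alpha> \<beta> = G \<alpha> \<beta>"
  proof (rule biadditive_eqI)
    show "additive (\<lambda>\<alpha>. F \<alpha> \<beta>')" "additive (F \<alpha>')" for \<alpha>' \<beta>'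
      by (simp_all add: additive_def F_def additive.add[OF additive_ipair_left]
          additive.add[OF additive_ipair_right] distrib_left distrib_right sum.distrib)
    show "additive (\<lambda>\<alpha>. G \<alpha> \<beta>')" "additive (G \<alpha>')" for \<alpha>' \<beta>'
      by (simp_all add: additive_def G_def additive.add[OF additive_euler_left]
          additive.add[OF additive_euler_right] additive.add[OF additive_rk]
          additive.add[OF additive_deg] algebra_simps)
  qed (unfold F_def G_def, rule sum_ipair_anticanon_power_Lmon[OF assms])
  then show ?thesis
    by (simp add: F_def G_def sigma_power ipair_Tcls_power[OF assms])
qed

end
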